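(* Let $\mathbb{C}$ be a regular Gumm category. Suppose given objects and morphisms $\varphi\colon P\to Z$, $\sigma\colon Z\to P$, $x\colon P\to X$, $f\colon X\to Y$, $s\colon Y\to X$, $y\colon Z\to Y$, $u\colon X\to U$, $v\colon Y\to V$, $w\colon U\to V$ in $\mathbb{C}$ such that: (i) $\varphi\sigma=1_Z$ and $fs=1_Y$ (so $\varphi$ and $f$ are split epimorphisms), $x\sigma=sy$, and $fx=y\varphi$; (ii) $x$ and $y$ are regular epimorphisms; (iii) $wu=vf$; (iv) the outer rectangle is a pullback, i.e. the square with sides $\varphi\colon P\to Z$, $ux\colon P\to U$, $vy\colon Z\to V$, $w\colon U\to V$ is a pullback (so $P\cong Z\times_V U$). Then both the left square ($fx=y\varphi$) and the right square ($wu=vf$) are pullbacks.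
   Context: A regular category is a finitely complete category in which every kernel pair has a coequaliser and regular epimorphisms are stable under pullback. For equivalence relations $R,S$ on an object $X$ of a finitely complete category, $R\,\square\, S$ denotes the largest double equivalence relation on $R$ and $S$: in terms of generalized elements, it is the relation on $R$ consisting of pairs $((a,b),(c,d))$ with $(a,b),(c,d)\in R$, $(a,c)\in S$ and $(b,d)\in S$; its two projections $\pi_1,\pi_2\colon R\square S\to R$ send such a pair to $(a,b)$ and $(c,d)$ respectively. If $T$ is another equivalence relation on $X$ with $R\wedge S\le T\le R$, there is a canonical inclusion $(i,j)$ of $T\square S$ into $R\square S$ over the inclusion $i\colon T\to R$. A finitely complete category is a Gumm category if for all equivalence relations $R,S,T$ on a same object with $R\wedge S\le T\le R$, this inclusion is a discrete fibration, i.e. the commutative squares $i\pi_k=\pi_k j$ ($k=1,2$) are pullbacks. *)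

theory Defs
  imports Main
begin

text \<open>Categories as records: objects, arrows, domain, codomain, composition
  (cmp C g f = g after f), identities.\<close>

record ('o, 'm) cat =
  Obj :: "'o set"
  Arr :: "'m set"
  Dom :: "'m \<Rightarrow> 'o"
  Cod :: "'m \<Rightarrow> 'o"
  cmp :: "'m \<Rightarrow> 'm \<Rightarrow> 'm"
  idn :: "'o \<Rightarrow> 'm"

definition hom :: "('o, 'm) cat \<Rightarrow> 'm \<Rightarrow> 'o \<Rightarrow> 'o \<Rightarrow> bool" where
  "hom C f A B \<longleftrightarrow> f \<in> Arr C \<and> Dom C f = A \<and> Cod C f = B \<and> A \<in> Obj C \<and> B \<in> Obj C"

definition category :: "('o, 'm) cat \<Rightarrow> bool" where
  "category C \<longleftrightarrow>
     (\<forall>f \<in> Arr C. Dom C f \<in> Obj C \<and> Cod C f \<in> Obj C) \<and>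
     (\<forall>A \<in> Obj C. hom C (idn C A) A A) \<and>
     (\<forall>A B C' f g. hom C f A B \<longrightarrow> hom C g B C' \<longrightarrow> hom C (cmp C g f) A C') \<and>
     (\<forall>A B f. hom C f A B \<longrightarrow> cmp C (idn C B) f = f \<and> cmp C f (idn C A) = f) \<and>
     (\<forall>A B C' D f g h. hom C f A B \<longrightarrow> hom C g B C' \<longrightarrow> hom C h C' D \<longrightarrow>
        cmp C h (cmp C g f) = cmp C (cmp C h g) f)"

definition is_pullback :: "('o, 'm) cat \<Rightarrow> 'm \<Rightarrow> 'm \<Rightarrow> 'm \<Rightarrow> 'm \<Rightarrow> bool" where
  "is_pullback C f g p q \<longleftrightarrow>
     f \<in> Arr C \<and> g \<in> Arr C \<and> p \<in> Arr C \<and> q \<in> Arr C \<and>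
     Cod C f = Cod C g \<and> Dom C p = Dom C q \<and>
     Cod C p = Dom C f \<and> Cod C q = Dom C g \<and>
     cmp C f p = cmp C g q \<and>
     (\<forall>W a b. hom C a W (Dom C f) \<longrightarrow> hom C b W (Dom C g) \<longrightarrow> cmp C f a = cmp C g b \<longrightarrow>
        (\<exists>!h. hom C h W (Dom C p) \<and> cmp C p h = a \<and> cmp C q h = b))"

definition is_terminal :: "('o, 'm) cat \<Rightarrow> 'o \<Rightarrow> bool" where
  "is_terminal C T \<longleftrightarrow> T \<in> Obj C \<and> (\<forall>A \<in> Obj C. \<exists>!h. hom C h A T)"

definition finitely_complete :: "('o, 'm) cat \<Rightarrow> bool" where
  "finitely_complete C \<longleftrightarrow> category C \<and> (\<exists>T. is_terminal C T) \<and>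
     (\<forall>f g. f \<in> Arr C \<longrightarrow> g \<in> Arr C \<longrightarrow> Cod C f = Cod C g \<longrightarrow>
        (\<exists>p q. is_pullback C f g p q))"

definition is_coequalizer :: "('o, 'm) cat \<Rightarrow> 'm \<Rightarrow> 'm \<Rightarrow> 'm \<Rightarrow> bool" where
  "is_coequalizer C a b e \<longleftrightarrow>
     a \<in> Arr C \<and> b \<in> Arr C \<and> e \<in> Arr C \<and>
     Dom C a = Dom C b \<and> Cod C a = Cod C b \<and> Dom C e = Cod C a \<and>
     cmp C e a = cmp C e b \<and>
     (\<forall>W g. hom C g (Cod C a) W \<longrightarrow> cmp C g a = cmp C g b \<longrightarrow>
        (\<exists>!h. hom C h (Cod C e) W \<and> cmp C h e = g))"

definition regular_epi :: "('o, 'm) cat \<Rightarrow> 'm \<Rightarrow> bool" where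
  "regular_epi C e \<longleftrightarrow> (\<exists>a b. is_coequalizer C a b e)"

definition is_kernel_pair :: "('o, 'm) cat \<Rightarrow> 'm \<Rightarrow> 'm \<Rightarrow> 'm \<Rightarrow> bool" where
  "is_kernel_pair C f p q \<longleftrightarrow> is_pullback C f f p q"

definition regular_category :: "('o, 'm) cat \<Rightarrow> bool" where
  "regular_category C \<longleftrightarrow> finitely_complete C \<and>
     (\<forall>f p q. is_kernel_pair C f p q \<longrightarrow> (\<exists>e. is_coequalizer C p q e)) \<and>
     (\<forall>f g p q. is_pullback C f g p q \<longrightarrow> regular_epi C f \<longrightarrow> regular_epi C q)"

text \<open>Internal relations via generalized elements.  A relation (R, r1, r2) on X:
  r1, r2 : R \<rightarrow> X jointly monic.  Membership of a generalized element
  (a, b) with a, b : W \<rightarrow> X.\<close>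

definition rel_mem :: "('o, 'm) cat \<Rightarrow> 'o \<Rightarrow> 'm \<Rightarrow> 'm \<Rightarrow> 'm \<Rightarrow> 'm \<Rightarrow> bool" where
  "rel_mem C R r1 r2 a b \<longleftrightarrow> (\<exists>h. hom C h (Dom C a) R \<and> cmp C r1 h = a \<and> cmp C r2 h = b)"

definition jointly_monic :: "('o, 'm) cat \<Rightarrow> 'o \<Rightarrow> 'm \<Rightarrow> 'm \<Rightarrow> bool" where
  "jointly_monic C R r1 r2 \<longleftrightarrow>
     (\<forall>W h k. hom C h W R \<longrightarrow> hom C k W R \<longrightarrow> cmp C r1 h = cmp C r1 k \<longrightarrow>
        cmp C r2 h = cmp C r2 k \<longrightarrow> h = k)"

definition is_relation :: "('o, 'm) cat \<Rightarrow> 'o \<Rightarrow> 'o \<Rightarrow> 'm \<Rightarrow> 'm \<Rightarrow> bool" where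
  "is_relation C X R r1 r2 \<longleftrightarrow> hom C r1 R X \<and> hom C r2 R X \<and> jointly_monic C R r1 r2"

definition equiv_rel :: "('o, 'm) cat \<Rightarrow> 'o \<Rightarrow> 'o \<Rightarrow> 'm \<Rightarrow> 'm \<Rightarrow> bool" where
  "equiv_rel C X R r1 r2 \<longleftrightarrow> is_relation C X R r1 r2 \<and>
     (\<forall>W a. hom C a W X \<longrightarrow> rel_mem C R r1 r2 a a) \<and>
     (\<forall>W a b. hom C a W X \<longrightarrow> hom C b W X \<longrightarrow> rel_mem C R r1 r2 a b \<longrightarrow> rel_mem C R r1 r2 b a) \<and>
     (\<forall>W a b c. hom C a W X \<longrightarrow> hom C b W X \<longrightarrow> hom C c W X \<longrightarrow>
        rel_mem C R r1 r2 a b \<longrightarrow> rel_mem C R r1 r2 b c \<longrightarrow> rel_mem C R r1 r2 a c)"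

text \<open>(D, p1, p2) is R \<box> S: jointly monic pair p1, p2 : D \<rightarrow> R whose generalized
  elements are exactly the pairs (g1, g2) of elements of R with
  (r1 g1, r1 g2) \<in> S and (r2 g1, r2 g2) \<in> S.\<close>
definition is_square_rel :: "('o, 'm) cat \<Rightarrow> 'o \<Rightarrow> 'm \<Rightarrow> 'm \<Rightarrow> 'o \<Rightarrow> 'm \<Rightarrow> 'm \<Rightarrow>
    'o \<Rightarrow> 'm \<Rightarrow> 'm \<Rightarrow> bool" where
  "is_square_rel C R r1 r2 S s1 s2 D p1 p2 \<longleftrightarrow>
     hom C p1 D R \<and> hom C p2 D R \<and> jointly_monic C D p1 p2 \<and>
     (\<forall>W g1 g2. hom C g1 W R \<longrightarrow> hom C g2 W R \<longrightarrow>
        ((\<exists>h. hom C h W D \<and> cmp C p1 h = g1 \<and> cmp C p2 h = g2) \<longleftrightarrow>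
         (rel_mem C S s1 s2 (cmp C r1 g1) (cmp C r1 g2) \<and>
          rel_mem C S s1 s2 (cmp C r2 g1) (cmp C r2 g2))))"

definition gumm_category :: "('o, 'm) cat \<Rightarrow> bool" where
  "gumm_category C \<longleftrightarrow> finitely_complete C \<and>
     (\<forall>X R r1 r2 S s1 s2 T t1 t2 i D p1 p2 E q1 q2 j.
        equiv_rel C X R r1 r2 \<longrightarrow> equiv_rel C X S s1 s2 \<longrightarrow> equiv_rel C X T t1 t2 \<longrightarrow>
        (\<forall>W a b. hom C a W X \<longrightarrow> hom C b W X \<longrightarrow>
           rel_mem C R r1 r2 a b \<longrightarrow> rel_mem C S s1 s2 a b \<longrightarrow> rel_mem C T t1 t2 a b) \<longrightarrow>
        (\<forall>W a b. hom C a W X \<longrightarrow> hom C b W X \<longrightarrow>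
           rel_mem C T t1 t2 a b \<longrightarrow> rel_mem C R r1 r2 a b) \<longrightarrow>
        hom C i T R \<longrightarrow> cmp C r1 i = t1 \<longrightarrow> cmp C r2 i = t2 \<longrightarrow>
        is_square_rel C R r1 r2 S s1 s2 D p1 p2 \<longrightarrow>
        is_square_rel C T t1 t2 S s1 s2 E q1 q2 \<longrightarrow>
        hom C j E D \<longrightarrow> cmp C p1 j = cmp C i q1 \<longrightarrow> cmp C p2 j = cmp C i q2 \<longrightarrow>
        is_pullback C i p1 q1 j \<and> is_pullback C i p2 q2 j)"

end

theory Submission
  imports Defs
begin

(*
  Write g = u x : P \<rightarrow> U.  The outer pullback says that \<phi> and g are
  jointly monic.  The heart of the argument is that f and u are jointly monic.
  Since x is a regular epimorphism and these are stable under pullback, it is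
  enough to check this on generalized elements of the form x p, i.e. to show:
  if f x p = f x q and g p = g q then x p = x q.  Put a = \<sigma>\<phi>p and b = \<sigma>\<phi>q; the
  split-epi identities give x a = s f x p = s f x q = x b.  With the kernel pairs
  R = Eq(g), S = Eq(\<phi>), T = Eq(x) we have R \<and> S = \<Delta> \<le> T \<le> R, (a,b) \<in> T,
  (a,p), (b,q) \<in> S and (p,q) \<in> R, so the Shifting Lemma -- which we derive from the
  Gumm property, the square relation R \<box> S being built as a kernel pair --
  yields (p,q) \<in> T.  Once f, u are jointly monic, the left square is a pullback
  directly from the outer one, and the right square is one after descending a
  factorisation along the regular epimorphism y.
*)

lemma cmp_hom: "category C \<Longrightarrow> hom C f A B \<Longrightarrow> hom C g B D \<Longrightarrow> hom C (cmp C g f) A D"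
  unfolding category_def by blast

lemma cmp_assoc: "category C \<Longrightarrow> hom C f A B \<Longrightarrow> hom C g B D \<Longrightarrow> hom C h D E \<Longrightarrow>
   cmp C h (cmp C g f) = cmp C (cmp C h g) f"
  unfolding category_def by blast

lemma id_l: "category C \<Longrightarrow> hom C f A B \<Longrightarrow> cmp C (idn C B) f = f"
  unfolding category_def by blast

lemma id_r: "category C \<Longrightarrow> hom C f A B \<Longrightarrow> cmp C f (idn C A) = f"
  unfolding category_def by blast

lemma id_hom: "category C \<Longrightarrow> A \<in> Obj C \<Longrightarrow> hom C (idn C A) A A"
  unfolding category_def by blast

lemma arr_hom: "category C \<Longrightarrow> f \<in> Arr C \<Longrightarrow> hom C f (Dom C f) (Cod C f)"
  unfolding category_def hom_def by blast

section \<open>Pullbacks\<close>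

lemma pb_comm: "is_pullback C f g p q \<Longrightarrow> cmp C f p = cmp C g q"
  unfolding is_pullback_def by auto

lemma pb_homs:
  assumes cat: "category C" and pb: "is_pullback C f g p q"
    and hf: "hom C f A B" and hg: "hom C g A' B"
  shows "hom C p (Dom C p) A" and "hom C q (Dom C p) A'"
proof -
  have "p \<in> Arr C" "q \<in> Arr C" "Cod C p = A" "Cod C q = A'" "Dom C q = Dom C p"
    using pb hf hg unfolding is_pullback_def hom_def by auto
  then show "hom C p (Dom C p) A" and "hom C q (Dom C p) A'"
    using arr_hom[OF cat] by metis+
qed

lemma pb_ex:
  assumes pb: "is_pullback C f g p q" and hf: "hom C f A B" and hg: "hom C g A' B"
    and ha: "hom C a W A" and hb: "hom C b W A'" and e: "cmp C f a = cmp C g b"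
  obtains h where "hom C h W (Dom C p)" "cmp C p h = a" "cmp C q h = b"
  using pb hf hg ha hb e unfolding is_pullback_def hom_def by metis

lemma pullback_jointly_monic:
  assumes cat: "category C" and pb: "is_pullback C f g p q"
    and hf: "hom C f A B" and hg: "hom C g A' B"
  shows "jointly_monic C (Dom C p) p q"
  unfolding jointly_monic_def
proof (intro allI impI)
  fix W h k
  assume hh: "hom C h W (Dom C p)" and hk: "hom C k W (Dom C p)"
    and e1: "cmp C p h = cmp C p k" and e2: "cmp C q h = cmp C q k"
  note hp = pb_homs(1)[OF cat pb hf hg] and hq = pb_homs(2)[OF cat pb hf hg]
  have "cmp C f (cmp C p h) = cmp C g (cmp C q h)"
    using cmp_assoc[OF cat hh hp hf] cmp_assoc[OF cat hh hq hg] pb_comm[OF pb] by simp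
  moreover have "hom C (cmp C p h) W (Dom C f)" "hom C (cmp C q h) W (Dom C g)"
    using cmp_hom[OF cat hh hp] cmp_hom[OF cat hh hq] hf hg by (auto simp: hom_def)
  ultimately have "\<exists>!m. hom C m W (Dom C p) \<and> cmp C p m = cmp C p h \<and> cmp C q m = cmp C q h"
    using pb unfolding is_pullback_def by blast
  then show "h = k" using hh hk e1 e2 by metis
qed

lemma pullbackI:
  assumes hf: "hom C f A B" and hg: "hom C g A' B"
    and hp: "hom C p Q A" and hq: "hom C q Q A'"
    and comm: "cmp C f p = cmp C g q" and jm: "jointly_monic C Q p q"
    and ex: "\<And>W a b. hom C a W A \<Longrightarrow> hom C b W A' \<Longrightarrow> cmp C f a = cmp C g b \<Longrightarrow>
               \<exists>h. hom C h W Q \<and> cmp C p h = a \<and> cmp C q h = b"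
  shows "is_pullback C f g p q"
proof -
  have uniq: "\<exists>!h. hom C h W Q \<and> cmp C p h = a \<and> cmp C q h = b"
    if "hom C a W A" "hom C b W A'" "cmp C f a = cmp C g b" for W a b
    using ex[OF that] jm unfolding jointly_monic_def by metis
  show ?thesis
    unfolding is_pullback_def using hf hg hp hq comm uniq by (auto simp: hom_def)
qed

lemma pullback_exists:
  assumes fc: "finitely_complete C" and hf: "hom C f A B" and hg: "hom C g A' B"
  obtains Q p q where "is_pullback C f g p q" "hom C p Q A" "hom C q Q A'"
proof -
  have cat: "category C" using fc by (simp add: finitely_complete_def)
  obtain p q where pb: "is_pullback C f g p q"
    using fc hf hg unfolding finitely_complete_def hom_def by metis
  then show thesis using that pb_homs[OF cat pb hf hg] by blast
qed

section \<open>Regular epimorphisms\<close>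

lemma regular_epi_cancel:
  assumes cat: "category C" and r: "regular_epi C e" and he: "hom C e A B"
    and hg: "hom C g B W" and hh: "hom C h B W" and eq: "cmp C g e = cmp C h e"
  shows "g = h"
proof -
  obtain a b where co: "is_coequalizer C a b e" using r unfolding regular_epi_def by blast
  have ca: "Cod C a = A" "Cod C b = A" "a \<in> Arr C" "b \<in> Arr C" "Cod C e = B" "Dom C a = Dom C b"
    using co he unfolding is_coequalizer_def hom_def by auto
  have ha: "hom C a (Dom C a) A" and hb: "hom C b (Dom C a) A" using arr_hom[OF cat] ca by metis+
  have ge: "hom C (cmp C g e) A W" using cmp_hom[OF cat he hg] .
  have "cmp C (cmp C g e) a = cmp C (cmp C g e) b"
    using co cmp_assoc[OF cat ha he hg] cmp_assoc[OF cat hb he hg] unfolding is_coequalizer_def by metis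
  then have "\<exists>!k. hom C k (Cod C e) W \<and> cmp C k e = cmp C g e"
    using co ge ca unfolding is_coequalizer_def by auto
  then show ?thesis using hg hh eq ca by metis
qed

lemma regular_epi_factor:
  assumes cat: "category C" and r: "regular_epi C e" and he: "hom C e A B"
    and hh: "hom C h A W"
    and compat: "\<And>V k k'. hom C k V A \<Longrightarrow> hom C k' V A \<Longrightarrow> cmp C e k = cmp C e k' \<Longrightarrow>
                   cmp C h k = cmp C h k'"
  obtains h' where "hom C h' B W" "cmp C h' e = h"
proof -
  obtain a b where co: "is_coequalizer C a b e" using r unfolding regular_epi_def by blast
  have ca: "Cod C a = A" "Cod C b = A" "a \<in> Arr C" "b \<in> Arr C" "Cod C e = B" "Dom C a = Dom C b"
    using co he unfolding is_coequalizer_def hom_def by auto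
  have ha: "hom C a (Dom C a) A" and hb: "hom C b (Dom C a) A" using arr_hom[OF cat] ca by metis+
  have "cmp C h a = cmp C h b"
    using compat[OF ha hb] co unfolding is_coequalizer_def by blast
  then show thesis using that co hh ca unfolding is_coequalizer_def by metis
qed

lemma regular_epi_lift:
  assumes reg: "regular_category C" and r: "regular_epi C e" and he: "hom C e A B"
    and ha: "hom C a W B"
  obtains W' e' a' where "hom C e' W' W" "regular_epi C e'" "hom C a' W' A"
    "cmp C e a' = cmp C a e'"
proof -
  have fc: "finitely_complete C" using reg by (simp add: regular_category_def)
  obtain Q p q where pb: "is_pullback C e a p q" and "hom C p Q A" "hom C q Q W"
    using pullback_exists[OF fc he ha] .
  moreover have "regular_epi C q" using reg pb r by (simp add: regular_category_def)
  ultimately show thesis using that pb_comm[OF pb] by blast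
qed

section \<open>Kernel pairs\<close>

lemma kernel_pair_mem:
  assumes cat: "category C" and pb: "is_pullback C f f k1 k2" and hf: "hom C f A B"
    and hk1: "hom C k1 K A" and ha: "hom C a W A" and hb: "hom C b W A"
  shows "rel_mem C K k1 k2 a b \<longleftrightarrow> cmp C f a = cmp C f b"
proof
  have hk2: "hom C k2 K A" using pb_homs[OF cat pb hf hf] hk1 by (auto simp: hom_def)
  assume "rel_mem C K k1 k2 a b"
  then obtain h where hh: "hom C h W K" and e: "cmp C k1 h = a" "cmp C k2 h = b"
    using ha unfolding rel_mem_def hom_def by auto
  show "cmp C f a = cmp C f b"
    using e cmp_assoc[OF cat hh hk1 hf] cmp_assoc[OF cat hh hk2 hf] pb_comm[OF pb] by simp
next
  assume "cmp C f a = cmp C f b"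
  then obtain h where "hom C h W (Dom C k1)" "cmp C k1 h = a" "cmp C k2 h = b"
    by (rule pb_ex[OF pb hf hf ha hb])
  then show "rel_mem C K k1 k2 a b" using hk1 ha unfolding rel_mem_def hom_def by auto
qed

lemma kernel_pair_equiv:
  assumes cat: "category C" and pb: "is_pullback C f f k1 k2" and hf: "hom C f A B"
    and hk1: "hom C k1 K A"
  shows "equiv_rel C A K k1 k2"
proof -
  have hk2: "hom C k2 K A" using pb_homs[OF cat pb hf hf] hk1 by (auto simp: hom_def)
  have "jointly_monic C K k1 k2"
    using pullback_jointly_monic[OF cat pb hf hf] hk1 by (simp add: hom_def)
  then show ?thesis unfolding equiv_rel_def is_relation_def
    using hk1 hk2 kernel_pair_mem[OF cat pb hf hk1] by metis
qed

section \<open>Binary products and the square relation\<close>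

definition is_binary_product :: "('o, 'm) cat \<Rightarrow> 'o \<Rightarrow> 'm \<Rightarrow> 'm \<Rightarrow> 'o \<Rightarrow> 'o \<Rightarrow> bool" where
  "is_binary_product C Pr p1 p2 M N \<longleftrightarrow>
     hom C p1 Pr M \<and> hom C p2 Pr N \<and> jointly_monic C Pr p1 p2 \<and>
     (\<forall>W m n. hom C m W M \<longrightarrow> hom C n W N \<longrightarrow>
        (\<exists>h. hom C h W Pr \<and> cmp C p1 h = m \<and> cmp C p2 h = n))"

text \<open>Products are pullbacks over the terminal object.\<close>
lemma product_exists:
  assumes fc: "finitely_complete C" and M: "M \<in> Obj C" and N: "N \<in> Obj C"
  obtains Pr p1 p2 where "is_binary_product C Pr p1 p2 M N"
proof -
  have cat: "category C" using fc by (simp add: finitely_complete_def)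
  obtain T where T: "is_terminal C T" using fc by (auto simp: finitely_complete_def)
  obtain tM where tM: "hom C tM M T" using T M unfolding is_terminal_def by blast
  obtain tN where tN: "hom C tN N T" using T N unfolding is_terminal_def by blast
  obtain Pr p q where pb: "is_pullback C tM tN p q" and hp: "hom C p Pr M" and hq: "hom C q Pr N"
    using pullback_exists[OF fc tM tN] .
  have Pr: "Dom C p = Pr" using hp by (simp add: hom_def)
  have "\<exists>h. hom C h W Pr \<and> cmp C p h = m \<and> cmp C q h = n"
    if hm: "hom C m W M" and hn: "hom C n W N" for W m n
  proof -
    have "W \<in> Obj C" using hm by (simp add: hom_def)
    moreover have "hom C (cmp C tM m) W T" "hom C (cmp C tN n) W T"
      using cmp_hom[OF cat hm tM] cmp_hom[OF cat hn tN] .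
    ultimately have "cmp C tM m = cmp C tN n" using T unfolding is_terminal_def by metis
    then show ?thesis using pb_ex[OF pb tM tN hm hn] Pr by metis
  qed
  moreover have "jointly_monic C Pr p q" using pullback_jointly_monic[OF cat pb tM tN] Pr by simp
  ultimately show thesis using that hp hq unfolding is_binary_product_def by blast
qed

lemma square_rel_as_kernel_pair:
  assumes cat: "category C" and hr1: "hom C r1 R P" and hr2: "hom C r2 R P"
    and hphi: "hom C \<phi> P Z" and pbS: "is_pullback C \<phi> \<phi> s1 s2" and hs1: "hom C s1 S P"
    and prod: "is_binary_product C Pr \<pi>1 \<pi>2 Z Z"
    and hk: "hom C k R Pr" and k1: "cmp C \<pi>1 k = cmp C \<phi> r1" and k2: "cmp C \<pi>2 k = cmp C \<phi> r2"
    and pbD: "is_pullback C k k d1 d2" and hd1: "hom C d1 D R"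
  shows "is_square_rel C R r1 r2 S s1 s2 D d1 d2"
proof -
  have hp1: "hom C \<pi>1 Pr Z" and hp2: "hom C \<pi>2 Pr Z" and jm: "jointly_monic C Pr \<pi>1 \<pi>2"
    using prod unfolding is_binary_product_def by auto
  have hd2: "hom C d2 D R" using pb_homs[OF cat pbD hk hk] hd1 by (auto simp: hom_def)
  have "jointly_monic C D d1 d2"
    using pullback_jointly_monic[OF cat pbD hk hk] hd1 by (simp add: hom_def)
  moreover have "(\<exists>h. hom C h W D \<and> cmp C d1 h = g1 \<and> cmp C d2 h = g2) \<longleftrightarrow>
         (rel_mem C S s1 s2 (cmp C r1 g1) (cmp C r1 g2) \<and>
          rel_mem C S s1 s2 (cmp C r2 g1) (cmp C r2 g2))"
    if g1: "hom C g1 W R" and g2: "hom C g2 W R" for W g1 g2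
  proof -
    have k_proj: "cmp C \<pi>1 (cmp C k g) = cmp C \<phi> (cmp C r1 g)"
      "cmp C \<pi>2 (cmp C k g) = cmp C \<phi> (cmp C r2 g)" if "hom C g W R" for g
      using cmp_assoc[OF cat that hk hp1] cmp_assoc[OF cat that hk hp2] k1 k2
        cmp_assoc[OF cat that hr1 hphi] cmp_assoc[OF cat that hr2 hphi] by simp_all
    have "(\<exists>h. hom C h W D \<and> cmp C d1 h = g1 \<and> cmp C d2 h = g2) \<longleftrightarrow> rel_mem C D d1 d2 g1 g2"
      using g1 unfolding rel_mem_def hom_def by auto
    also have "\<dots> \<longleftrightarrow> cmp C k g1 = cmp C k g2"
      using kernel_pair_mem[OF cat pbD hk hd1 g1 g2] .
    also have "\<dots> \<longleftrightarrow> cmp C \<phi> (cmp C r1 g1) = cmp C \<phi> (cmp C r1 g2) \<and>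
                      cmp C \<phi> (cmp C r2 g1) = cmp C \<phi> (cmp C r2 g2)"
      using k_proj[OF g1] k_proj[OF g2] jm cmp_hom[OF cat g1 hk] cmp_hom[OF cat g2 hk]
      unfolding jointly_monic_def by metis
    also have "\<dots> \<longleftrightarrow> rel_mem C S s1 s2 (cmp C r1 g1) (cmp C r1 g2) \<and>
                      rel_mem C S s1 s2 (cmp C r2 g1) (cmp C r2 g2)"
      using kernel_pair_mem[OF cat pbS hphi hs1] cmp_hom[OF cat g1 hr1] cmp_hom[OF cat g2 hr1]
        cmp_hom[OF cat g1 hr2] cmp_hom[OF cat g2 hr2] by metis
    finally show ?thesis .
  qed
  ultimately show ?thesis unfolding is_square_rel_def using hd1 hd2 by blast
qed

lemma square_rel_exists:
  assumes fc: "finitely_complete C" and hr1: "hom C r1 R P" and hr2: "hom C r2 R P"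
    and hphi: "hom C \<phi> P Z" and pbS: "is_pullback C \<phi> \<phi> s1 s2" and hs1: "hom C s1 S P"
  obtains D d1 d2 where "is_square_rel C R r1 r2 S s1 s2 D d1 d2"
proof -
  have cat: "category C" using fc by (simp add: finitely_complete_def)
  have "Z \<in> Obj C" using hphi by (simp add: hom_def)
  then obtain Pr \<pi>1 \<pi>2 where prod: "is_binary_product C Pr \<pi>1 \<pi>2 Z Z"
    using product_exists[OF fc] by metis
  obtain k where hk: "hom C k R Pr" and "cmp C \<pi>1 k = cmp C \<phi> r1" "cmp C \<pi>2 k = cmp C \<phi> r2"
    using prod cmp_hom[OF cat hr1 hphi] cmp_hom[OF cat hr2 hphi]
    unfolding is_binary_product_def by blast
  moreover obtain D d1 d2 where "is_pullback C k k d1 d2" "hom C d1 D R"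
    using pullback_exists[OF fc hk hk] by metis
  ultimately show thesis
    using that square_rel_as_kernel_pair[OF cat hr1 hr2 hphi pbS hs1 prod] by blast
qed

lemma square_rel_inclusion:
  assumes cat: "category C"
    and sqD: "is_square_rel C R r1 r2 S s1 s2 D d1 d2"
    and sqE: "is_square_rel C T t1 t2 S s1 s2 E e1 e2"
    and hi: "hom C i T R" and i1: "cmp C r1 i = t1" and i2: "cmp C r2 i = t2"
    and hr1: "hom C r1 R X" and hr2: "hom C r2 R X"
  obtains j where "hom C j E D" "cmp C d1 j = cmp C i e1" "cmp C d2 j = cmp C i e2"
proof -
  have he1: "hom C e1 E T" and he2: "hom C e2 E T" using sqE unfolding is_square_rel_def by auto
  have "E \<in> Obj C" using he1 by (simp add: hom_def)
  then have "\<exists>h. hom C h E E \<and> cmp C e1 h = e1 \<and> cmp C e2 h = e2"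
    using id_hom[OF cat] id_r[OF cat he1] id_r[OF cat he2] by blast
  then have S: "rel_mem C S s1 s2 (cmp C t1 e1) (cmp C t1 e2)"
               "rel_mem C S s1 s2 (cmp C t2 e1) (cmp C t2 e2)"
    using sqE he1 he2 unfolding is_square_rel_def by blast+
  have "cmp C r1 (cmp C i e) = cmp C t1 e" "cmp C r2 (cmp C i e) = cmp C t2 e"
    if "hom C e E T" for e
    using cmp_assoc[OF cat that hi hr1] cmp_assoc[OF cat that hi hr2] i1 i2 by simp_all
  then show thesis
    using that S sqD cmp_hom[OF cat he1 hi] cmp_hom[OF cat he2 hi] he1 he2
    unfolding is_square_rel_def by metis
qed

section \<open>The Shifting Lemma in a Gumm category\<close>

text \<open>Indeed ((a,b),(c,d)) is an element of R \<box> S whose first projection lies in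
  T, and the Gumm property says T \<box> S \<rightarrow> R \<box> S is a discrete fibration.\<close>
lemma gumm_shifting:
  assumes gumm: "gumm_category C"
    and eqR: "equiv_rel C P R r1 r2" and eqT: "equiv_rel C P T t1 t2"
    and hphi: "hom C \<phi> P Z"
    and meet: "\<And>W a b. hom C a W P \<Longrightarrow> hom C b W P \<Longrightarrow> rel_mem C R r1 r2 a b \<Longrightarrow>
                 cmp C \<phi> a = cmp C \<phi> b \<Longrightarrow> rel_mem C T t1 t2 a b"
    and below: "\<And>W a b. hom C a W P \<Longrightarrow> hom C b W P \<Longrightarrow> rel_mem C T t1 t2 a b \<Longrightarrow>
                  rel_mem C R r1 r2 a b"
    and ha: "hom C a W P" and hb: "hom C b W P" and hc: "hom C c W P" and hd: "hom C d W P"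
    and ab: "rel_mem C T t1 t2 a b" and ac: "cmp C \<phi> a = cmp C \<phi> c"
    and bd: "cmp C \<phi> b = cmp C \<phi> d" and cd: "rel_mem C R r1 r2 c d"
  shows "rel_mem C T t1 t2 c d"
proof -
  have fc: "finitely_complete C" using gumm by (simp add: gumm_category_def)
  have cat: "category C" using fc by (simp add: finitely_complete_def)
  have hr1: "hom C r1 R P" and hr2: "hom C r2 R P" and ht1: "hom C t1 T P" and ht2: "hom C t2 T P"
    using eqR eqT unfolding equiv_rel_def is_relation_def by auto
  obtain S s1 s2 where pbS: "is_pullback C \<phi> \<phi> s1 s2" and hs1: "hom C s1 S P"
    using pullback_exists[OF fc hphi hphi] by metis
  note S_mem = kernel_pair_mem[OF cat pbS hphi hs1]
  have eqS: "equiv_rel C P S s1 s2" using kernel_pair_equiv[OF cat pbS hphi hs1] .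
  txt \<open>The inclusion T \<le> R, obtained by applying it to the generic element of T.\<close>
  have "rel_mem C T t1 t2 t1 t2"
    using ht1 id_hom[OF cat] id_r[OF cat ht1] id_r[OF cat ht2]
    unfolding rel_mem_def hom_def by metis
  then obtain i where hi: "hom C i T R" and i1: "cmp C r1 i = t1" and i2: "cmp C r2 i = t2"
    using below[OF ht1 ht2] ht1 unfolding rel_mem_def hom_def by auto
  obtain D d1 d2 where sqD: "is_square_rel C R r1 r2 S s1 s2 D d1 d2"
    using square_rel_exists[OF fc hr1 hr2 hphi pbS hs1] .
  obtain E e1 e2 where sqE: "is_square_rel C T t1 t2 S s1 s2 E e1 e2"
    using square_rel_exists[OF fc ht1 ht2 hphi pbS hs1] .
  obtain j where hj: "hom C j E D" and j1: "cmp C d1 j = cmp C i e1" and j2: "cmp C d2 j = cmp C i e2"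
    using square_rel_inclusion[OF cat sqD sqE hi i1 i2 hr1 hr2] .
  have hd1: "hom C d1 D R" and hd2: "hom C d2 D R" using sqD unfolding is_square_rel_def by auto
  have he1: "hom C e1 E T" and he2: "hom C e2 E T" using sqE unfolding is_square_rel_def by auto
  have meetS: "rel_mem C T t1 t2 a b"
    if "hom C a W P" "hom C b W P" "rel_mem C R r1 r2 a b" "rel_mem C S s1 s2 a b" for W a b
    using meet S_mem that by blast
  have fib: "is_pullback C i d1 e1 j"
    by (rule conjunct1[OF gumm_category_def[THEN iffD1, OF gumm, THEN conjunct2, rule_format,
          of P R r1 r2 S s1 s2 T t1 t2 i D d1 d2 E e1 e2 j]])
      (fact eqR eqS eqT hi i1 i2 sqD sqE hj j1 j2 | rule meetS below; assumption)+
  txt \<open>The element ((a,b),(c,d)) of R \<box> S, with (a,b) \<in> T.\<close>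
  obtain kT where hkT: "hom C kT W T" and kT1: "cmp C t1 kT = a" and kT2: "cmp C t2 kT = b"
    using ab ha unfolding rel_mem_def hom_def by auto
  obtain kR where hkR: "hom C kR W R" and kR1: "cmp C r1 kR = c" and kR2: "cmp C r2 kR = d"
    using cd hc unfolding rel_mem_def hom_def by auto
  have iT1: "cmp C r1 (cmp C i kT) = a" and iT2: "cmp C r2 (cmp C i kT) = b"
    using cmp_assoc[OF cat hkT hi hr1] cmp_assoc[OF cat hkT hi hr2] i1 i2 kT1 kT2 by simp_all
  obtain m where hm: "hom C m W D" and m1: "cmp C d1 m = cmp C i kT" and m2: "cmp C d2 m = kR"
    using sqD cmp_hom[OF cat hkT hi] hkR iT1 iT2 kR1 kR2 S_mem[OF ha hc] S_mem[OF hb hd] ac bd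
    unfolding is_square_rel_def by metis
  txt \<open>Lift it along the discrete fibration; its second projection then lies in T.\<close>
  obtain h where hh: "hom C h W (Dom C e1)" and h2: "cmp C j h = m"
    using pb_ex[OF fib hi hd1 hkT hm m1[symmetric]] by metis
  have hh': "hom C h W E" using hh he1 by (simp add: hom_def)
  have "cmp C i (cmp C e2 h) = kR"
    using cmp_assoc[OF cat hh' he2 hi] cmp_assoc[OF cat hh' hj hd2] j2 h2 m2 by simp
  then have "cmp C t1 (cmp C e2 h) = c" "cmp C t2 (cmp C e2 h) = d"
    using cmp_assoc[OF cat cmp_hom[OF cat hh' he2] hi hr1]
      cmp_assoc[OF cat cmp_hom[OF cat hh' he2] hi hr2] i1 i2 kR1 kR2 by auto
  then show ?thesis using cmp_hom[OF cat hh' he2] hc unfolding rel_mem_def hom_def by auto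
qed

lemma gumm_shifting_kernels:
  assumes gumm: "gumm_category C"
    and hphi: "hom C \<phi> P Z" and hg: "hom C g P U" and hx: "hom C x P X"
    and meet: "\<And>W a b. hom C a W P \<Longrightarrow> hom C b W P \<Longrightarrow> cmp C \<phi> a = cmp C \<phi> b \<Longrightarrow>
                 cmp C g a = cmp C g b \<Longrightarrow> cmp C x a = cmp C x b"
    and below: "\<And>W a b. hom C a W P \<Longrightarrow> hom C b W P \<Longrightarrow> cmp C x a = cmp C x b \<Longrightarrow>
                  cmp C g a = cmp C g b"
    and ha: "hom C a W P" and hb: "hom C b W P" and hc: "hom C c W P" and hd: "hom C d W P"
    and ab: "cmp C x a = cmp C x b" and ac: "cmp C \<phi> a = cmp C \<phi> c"
    and bd: "cmp C \<phi> b = cmp C \<phi> d" and cd: "cmp C g c = cmp C g d"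
  shows "cmp C x c = cmp C x d"
proof -
  have fc: "finitely_complete C" using gumm by (simp add: gumm_category_def)
  have cat: "category C" using fc by (simp add: finitely_complete_def)
  obtain R r1 r2 where pbR: "is_pullback C g g r1 r2" and hr1: "hom C r1 R P"
    using pullback_exists[OF fc hg hg] by metis
  obtain T t1 t2 where pbT: "is_pullback C x x t1 t2" and ht1: "hom C t1 T P"
    using pullback_exists[OF fc hx hx] by metis
  note R_mem = kernel_pair_mem[OF cat pbR hg hr1]
    and T_mem = kernel_pair_mem[OF cat pbT hx ht1]
  have "rel_mem C T t1 t2 c d"
  proof (rule gumm_shifting[OF gumm kernel_pair_equiv[OF cat pbR hg hr1]
        kernel_pair_equiv[OF cat pbT hx ht1] hphi _ _ ha hb hc hd _ ac bd])
    show "rel_mem C T t1 t2 a' b'"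
      if "hom C a' W' P" "hom C b' W' P" "rel_mem C R r1 r2 a' b'" "cmp C \<phi> a' = cmp C \<phi> b'"
      for W' a' b'
      using that meet R_mem T_mem by blast
    show "rel_mem C R r1 r2 a' b'"
      if "hom C a' W' P" "hom C b' W' P" "rel_mem C T t1 t2 a' b'" for W' a' b'
      using that below R_mem T_mem by blast
  qed (use ab cd R_mem[OF hc hd] T_mem[OF ha hb] in auto)
  then show ?thesis using T_mem[OF hc hd] by blast
qed

text \<open>Apply the
  Shifting Lemma to a = \<sigma>\<phi>p, b = \<sigma>\<phi>q, c = p, d = q.\<close>
lemma split_square_cancel:
  assumes gumm: "gumm_category C"
    and h_phi: "hom C \<phi> P Z" and h_sigma: "hom C \<sigma> Z P" and h_x: "hom C x P X"
    and h_f: "hom C f X Y" and h_s: "hom C s Y X" and h_y: "hom C y Z Y" and h_u: "hom C u X U"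
    and split: "cmp C \<phi> \<sigma> = idn C Z" and sect: "cmp C x \<sigma> = cmp C s y"
    and comm: "cmp C f x = cmp C y \<phi>"
    and jm: "jointly_monic C P \<phi> (cmp C u x)"
    and hp: "hom C p W P" and hq: "hom C q W P"
    and ef: "cmp C f (cmp C x p) = cmp C f (cmp C x q)"
    and eu: "cmp C u (cmp C x p) = cmp C u (cmp C x q)"
  shows "cmp C x p = cmp C x q"
proof -
  have cat: "category C" using gumm by (simp add: gumm_category_def finitely_complete_def)
  define g where "g = cmp C u x"
  have hg: "hom C g P U" unfolding g_def using cmp_hom[OF cat h_x h_u] .
  have g_x: "cmp C g a = cmp C u (cmp C x a)" if "hom C a W' P" for W' a
    unfolding g_def using cmp_assoc[OF cat that h_x h_u] by simp
  have x_retract: "cmp C x (cmp C \<sigma> (cmp C \<phi> a)) = cmp C s (cmp C f (cmp C x a))"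
    if ha: "hom C a W P" for a
  proof -
    have h1: "hom C (cmp C \<phi> a) W Z" using cmp_hom[OF cat ha h_phi] .
    have "cmp C x (cmp C \<sigma> (cmp C \<phi> a)) = cmp C s (cmp C y (cmp C \<phi> a))"
      using cmp_assoc[OF cat h1 h_sigma h_x] cmp_assoc[OF cat h1 h_y h_s] sect by simp
    also have "\<dots> = cmp C s (cmp C f (cmp C x a))"
      using cmp_assoc[OF cat ha h_phi h_y] cmp_assoc[OF cat ha h_x h_f] comm by simp
    finally show ?thesis .
  qed
  have phi_retract: "cmp C \<phi> (cmp C \<sigma> (cmp C \<phi> a)) = cmp C \<phi> a" if ha: "hom C a W P" for a
  proof -
    have h1: "hom C (cmp C \<phi> a) W Z" using cmp_hom[OF cat ha h_phi] .
    show ?thesis using cmp_assoc[OF cat h1 h_sigma h_phi] split id_l[OF cat h1] by simp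
  qed
  have hsp: "hom C (cmp C \<sigma> (cmp C \<phi> a)) W P" if "hom C a W P" for a
    using cmp_hom[OF cat cmp_hom[OF cat that h_phi] h_sigma] .
  show ?thesis
  proof (rule gumm_shifting_kernels[OF gumm h_phi hg h_x _ _ hsp[OF hp] hsp[OF hq] hp hq])
    show "cmp C x a = cmp C x b"
      if "hom C a W' P" "hom C b W' P" "cmp C \<phi> a = cmp C \<phi> b" "cmp C g a = cmp C g b" for W' a b
      using that jm unfolding g_def jointly_monic_def by metis
    show "cmp C g a = cmp C g b" if "hom C a W' P" "hom C b W' P" "cmp C x a = cmp C x b" for W' a b
      using that g_x by metis
  qed (use x_retract[OF hp] x_retract[OF hq] ef phi_retract[OF hp] phi_retract[OF hq]
         g_x[OF hp] g_x[OF hq] eu in auto)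
qed

text \<open>In a regular category, a pair of arrows out of X is jointly monic as soon as
  it is so on generalized elements factoring through a regular epimorphism
  P \<rightarrow> X: both test maps are lifted along x after a regular epimorphic cover.\<close>
lemma jointly_monic_through_regular_epi:
  assumes reg: "regular_category C" and rx: "regular_epi C x" and hx: "hom C x P X"
    and hf: "hom C f X Y" and hu: "hom C u X U"
    and cancel: "\<And>W p q. hom C p W P \<Longrightarrow> hom C q W P \<Longrightarrow>
                   cmp C f (cmp C x p) = cmp C f (cmp C x q) \<Longrightarrow>
                   cmp C u (cmp C x p) = cmp C u (cmp C x q) \<Longrightarrow> cmp C x p = cmp C x q"
  shows "jointly_monic C X f u"
  unfolding jointly_monic_def
proof (intro allI impI)
  fix W a b
  assume ha: "hom C a W X" and hb: "hom C b W X"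
    and ef: "cmp C f a = cmp C f b" and eu: "cmp C u a = cmp C u b"
  have cat: "category C" using reg by (simp add: regular_category_def finitely_complete_def)
  obtain W1 e1 p1 where he1: "hom C e1 W1 W" and re1: "regular_epi C e1" and hp1: "hom C p1 W1 P"
    and xp1: "cmp C x p1 = cmp C a e1"
    using regular_epi_lift[OF reg rx hx ha] .
  have hbe1: "hom C (cmp C b e1) W1 X" using cmp_hom[OF cat he1 hb] .
  obtain W2 e2 p2 where he2: "hom C e2 W2 W1" and re2: "regular_epi C e2" and hp2: "hom C p2 W2 P"
    and xp2: "cmp C x p2 = cmp C (cmp C b e1) e2"
    using regular_epi_lift[OF reg rx hx hbe1] .
  define e where "e = cmp C e1 e2"
  have he: "hom C e W2 W" unfolding e_def using cmp_hom[OF cat he2 he1] .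
  have hpe: "hom C (cmp C p1 e2) W2 P" using cmp_hom[OF cat he2 hp1] .
  have xa: "cmp C x (cmp C p1 e2) = cmp C a e"
    unfolding e_def using cmp_assoc[OF cat he2 hp1 hx] cmp_assoc[OF cat he2 he1 ha] xp1 by simp
  have xb: "cmp C x p2 = cmp C b e"
    unfolding e_def using cmp_assoc[OF cat he2 he1 hb] xp2 by simp
  have "cmp C f (cmp C a e) = cmp C f (cmp C b e)" "cmp C u (cmp C a e) = cmp C u (cmp C b e)"
    using cmp_assoc[OF cat he ha hf] cmp_assoc[OF cat he hb hf]
      cmp_assoc[OF cat he ha hu] cmp_assoc[OF cat he hb hu] ef eu by simp_all
  then have "cmp C a e = cmp C b e" using cancel[OF hpe hp2] xa xb by simp
  then have "cmp C (cmp C a e1) e2 = cmp C (cmp C b e1) e2"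
    unfolding e_def using cmp_assoc[OF cat he2 he1 ha] cmp_assoc[OF cat he2 he1 hb] by simp
  then have "cmp C a e1 = cmp C b e1"
    using regular_epi_cancel[OF cat re2 he2 cmp_hom[OF cat he1 ha] hbe1] by simp
  then show "a = b" using regular_epi_cancel[OF cat re1 he1 ha hb] by simp
qed

lemma left_square_pullback:
  assumes cat: "category C"
    and h_phi: "hom C \<phi> P Z" and h_x: "hom C x P X" and h_f: "hom C f X Y"
    and h_y: "hom C y Z Y" and h_u: "hom C u X U" and h_v: "hom C v Y V" and h_w: "hom C w U V"
    and comm: "cmp C f x = cmp C y \<phi>" and comm': "cmp C w u = cmp C v f"
    and outer: "is_pullback C (cmp C v y) w \<phi> (cmp C u x)"
    and jm: "jointly_monic C X f u"
  shows "is_pullback C y f \<phi> x"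
proof -
  have hvy: "hom C (cmp C v y) Z V" using cmp_hom[OF cat h_y h_v] .
  have jm_outer: "jointly_monic C P \<phi> (cmp C u x)"
    using pullback_jointly_monic[OF cat outer hvy h_w] h_phi by (simp add: hom_def)
  have u_x: "cmp C (cmp C u x) h = cmp C u (cmp C x h)" if "hom C h W P" for W h
    using cmp_assoc[OF cat that h_x h_u] by simp
  show ?thesis
  proof (rule pullbackI[OF h_y h_f h_phi h_x comm[symmetric]])
    show "jointly_monic C P \<phi> x"
      using jm_outer u_x unfolding jointly_monic_def by metis
  next
    fix W a b assume ha: "hom C a W Z" and hb: "hom C b W X" and e: "cmp C y a = cmp C f b"
    have "cmp C (cmp C v y) a = cmp C w (cmp C u b)"
      using cmp_assoc[OF cat ha h_y h_v] cmp_assoc[OF cat hb h_f h_v] cmp_assoc[OF cat hb h_u h_w]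
        comm' e by simp
    then obtain h where hh: "hom C h W (Dom C \<phi>)" and h1: "cmp C \<phi> h = a"
      and h2: "cmp C (cmp C u x) h = cmp C u b"
      using pb_ex[OF outer hvy h_w ha cmp_hom[OF cat hb h_u]] by metis
    have hh': "hom C h W P" using hh h_phi by (simp add: hom_def)
    have "cmp C f (cmp C x h) = cmp C f b"
      using cmp_assoc[OF cat hh' h_x h_f] comm cmp_assoc[OF cat hh' h_phi h_y] h1 e by simp
    moreover have "cmp C u (cmp C x h) = cmp C u b" using u_x[OF hh'] h2 by simp
    ultimately have "cmp C x h = b" using jm cmp_hom[OF cat hh' h_x] hb
      unfolding jointly_monic_def by metis
    then show "\<exists>h. hom C h W P \<and> cmp C \<phi> h = a \<and> cmp C x h = b" using hh' h1 by blast
  qed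
qed

text \<open>A cone over the right square is first lifted along y, then
  through the outer pullback, and the result descends along the cover.\<close>
lemma right_square_pullback:
  assumes reg: "regular_category C" and ry: "regular_epi C y"
    and h_phi: "hom C \<phi> P Z" and h_x: "hom C x P X" and h_f: "hom C f X Y"
    and h_y: "hom C y Z Y" and h_u: "hom C u X U" and h_v: "hom C v Y V" and h_w: "hom C w U V"
    and comm: "cmp C f x = cmp C y \<phi>" and comm': "cmp C w u = cmp C v f"
    and outer: "is_pullback C (cmp C v y) w \<phi> (cmp C u x)"
    and jm: "jointly_monic C X f u"
  shows "is_pullback C v w f u"
proof (rule pullbackI[OF h_v h_w h_f h_u comm'[symmetric] jm])
  have cat: "category C" using reg by (simp add: regular_category_def finitely_complete_def)
  have hvy: "hom C (cmp C v y) Z V" using cmp_hom[OF cat h_y h_v] .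
  fix W a b assume ha: "hom C a W Y" and hb: "hom C b W U" and e: "cmp C v a = cmp C w b"
  obtain W1 e0 z where he0: "hom C e0 W1 W" and re0: "regular_epi C e0" and hz: "hom C z W1 Z"
    and yz: "cmp C y z = cmp C a e0"
    using regular_epi_lift[OF reg ry h_y ha] .
  have "cmp C (cmp C v y) z = cmp C w (cmp C b e0)"
    using cmp_assoc[OF cat hz h_y h_v] yz cmp_assoc[OF cat he0 ha h_v] e
      cmp_assoc[OF cat he0 hb h_w] by simp
  then obtain p where hp: "hom C p W1 (Dom C \<phi>)" and p1: "cmp C \<phi> p = z"
    and p2: "cmp C (cmp C u x) p = cmp C b e0"
    using pb_ex[OF outer hvy h_w hz cmp_hom[OF cat he0 hb]] by metis
  have hp': "hom C p W1 P" using hp h_phi by (simp add: hom_def)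
  define h1 where "h1 = cmp C x p"
  have hh1: "hom C h1 W1 X" unfolding h1_def using cmp_hom[OF cat hp' h_x] .
  have fh1: "cmp C f h1 = cmp C a e0"
    unfolding h1_def using cmp_assoc[OF cat hp' h_x h_f] comm cmp_assoc[OF cat hp' h_phi h_y] p1 yz
    by simp
  have uh1: "cmp C u h1 = cmp C b e0"
    unfolding h1_def using cmp_assoc[OF cat hp' h_x h_u] p2 by simp
  obtain h where hh: "hom C h W X" and he: "cmp C h e0 = h1"
  proof (rule regular_epi_factor[OF cat re0 he0 hh1])
    fix V k k' assume hk: "hom C k V W1" and hk': "hom C k' V W1" and ek: "cmp C e0 k = cmp C e0 k'"
    have "cmp C f (cmp C h1 k) = cmp C f (cmp C h1 k')"
      using cmp_assoc[OF cat hk hh1 h_f] cmp_assoc[OF cat hk' hh1 h_f] fh1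
        cmp_assoc[OF cat hk he0 ha] cmp_assoc[OF cat hk' he0 ha] ek by simp
    moreover have "cmp C u (cmp C h1 k) = cmp C u (cmp C h1 k')"
      using cmp_assoc[OF cat hk hh1 h_u] cmp_assoc[OF cat hk' hh1 h_u] uh1
        cmp_assoc[OF cat hk he0 hb] cmp_assoc[OF cat hk' he0 hb] ek by simp
    ultimately show "cmp C h1 k = cmp C h1 k'"
      using jm cmp_hom[OF cat hk hh1] cmp_hom[OF cat hk' hh1] unfolding jointly_monic_def by blast
  qed
  have "cmp C f h = a"
    using regular_epi_cancel[OF cat re0 he0 cmp_hom[OF cat hh h_f] ha] cmp_assoc[OF cat he0 hh h_f]
      he fh1 by simp
  moreover have "cmp C u h = b"
    using regular_epi_cancel[OF cat re0 he0 cmp_hom[OF cat hh h_u] hb] cmp_assoc[OF cat he0 hh h_u]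
      he uh1 by simp
  ultimately show "\<exists>h. hom C h W X \<and> cmp C f h = a \<and> cmp C u h = b" using hh by blast
qed

theorem proposition4p1:
  fixes C :: "('o, 'm) cat"
  assumes reg: "regular_category C" and gumm: "gumm_category C"
    and h_phi: "hom C \<phi> P Z" and h_sigma: "hom C \<sigma> Z P" and h_x: "hom C x P X"
    and h_f: "hom C f X Y" and h_s: "hom C s Y X" and h_y: "hom C y Z Y"
    and h_u: "hom C u X U" and h_v: "hom C v Y V" and h_w: "hom C w U V"
    and i1: "cmp C \<phi> \<sigma> = idn C Z" and i2: "cmp C f s = idn C Y"
    and i3: "cmp C x \<sigma> = cmp C s y" and i4: "cmp C f x = cmp C y \<phi>"
    and ii: "regular_epi C x" "regular_epi C y"
    and iii: "cmp C w u = cmp C v f"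
    and iv: "is_pullback C (cmp C v y) w \<phi> (cmp C u x)"
  shows "is_pullback C y f \<phi> x \<and> is_pullback C v w f u"
proof -
  have cat: "category C" using reg by (simp add: regular_category_def finitely_complete_def)
  have "jointly_monic C P \<phi> (cmp C u x)"
    using pullback_jointly_monic[OF cat iv cmp_hom[OF cat h_y h_v] h_w] h_phi
    by (simp add: hom_def)
  then have "jointly_monic C X f u"
    using jointly_monic_through_regular_epi[OF reg ii(1) h_x h_f h_u]
      split_square_cancel[OF gumm h_phi h_sigma h_x h_f h_s h_y h_u i1 i3 i4] by blast
  then show ?thesis
    using left_square_pullback[OF cat h_phi h_x h_f h_y h_u h_v h_w i4 iii iv]
      right_square_pullback[OF reg ii(2) h_phi h_x h_f h_y h_u h_v h_w i4 iii iv] by blast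
qed

end
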